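(* Let $G$ be any GP 2 host graph in which every node is marked grey and is not a root, and every edge is unmarked (labels arbitrary; parallel edges and loops allowed). Then the execution of the GP 2 program is-dag on $G$ terminates, and: if $G$ is acyclic, it does not fail and returns a host graph isomorphic to $G$ up to marks; if $G$ contains a directed cycle, it fails. (That is, is-dag is totally correct with respect to this specification.)
   Context: A graph is acyclic if it contains no directed cycle; a loop (edge from a node to itself) counts as a directed cycle. "Isomorphic up to marks" means isomorphic when marks and root status are ignored. GP 2 semantics. Host graphs are finite directed graphs whose nodes and edges carry labels (lists of integers and strings) and marks (nodes: unmarked, red, green, blue, grey; edges: unmarked, red, green, blue, dashed); some nodes are roots. A rule is applied by finding an injective match of its left-hand side compatible with labels and marks (mark "any" matches every mark; roots match roots), satisfying the dangling condition, then changing matched items as prescribed by the right-hand side. Commands: a rule set call $\{r_1,\dots,r_k\}$ applies one applicable rule, failing if none applies; $P;Q$ sequencing; $P!$ iterates $P$ until it fails, returning the graph on which $P$ was last entered (a break inside the body terminates the innermost loop with the current graph); "try $C$ then $P$ else $Q$" runs $C$ and continues with $P$ on its result if it succeeded, else runs $Q$ on the original graph (missing branches do nothing); "if $C$ then $P$ else $Q$" runs $C$ on a copy then $P$ or $Q$ on the original; fail causes failure. The program is-dag (variables of type list; all rules keep labels; rule edges are directed from node 1 to node 2): Main = (init; DFS!; try unroot else break)!; Check DFS = try next_edge then (try {move, ignore} else (set_flag; break)) else (try loop; try back else break) Check = if flag then fail - init: a grey non-root node becomes a red root. - unroot: a red root becomes a blue non-root node. - set_flag: a red root becomes a green root. -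 flag: a green root; no change (test). - next_edge: a red root 1, a node 2 of any mark, an unmarked edge from 1 to 2; the edge becomes red. - ignore: red root 1, blue node 2, red edge from 1 to 2; the edge becomes blue. - move: red root 1, grey node 2, red edge from 1 to 2; node 1 becomes a red non-root, node 2 becomes a red root, the edge becomes dashed. - back: red non-root 1, red root 2, dashed edge from 1 to 2; node 1 becomes a red root, node 2 becomes a blue non-root, the edge becomes blue. - loop: a red root with an unmarked loop; the node becomes a green root, the loop is unchanged. *)

theory Defs
  imports Main
begin

datatype atom = AInt int | AStr string
type_synonym label = "atom list"

datatype nmark = NUnmarked | NRed | NGreen | NBlue | NGrey
datatype emark = EUnmarked | ERed | EGreen | EBlue | EDashed

record ('v, 'e) hgraph =
  V :: "'v set"
  E :: "'e set"
  src :: "'e \<Rightarrow> 'v"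
  tgt :: "'e \<Rightarrow> 'v"
  nlab :: "'v \<Rightarrow> label"
  elab :: "'e \<Rightarrow> label"
  nmark :: "'v \<Rightarrow> nmark"
  emark :: "'e \<Rightarrow> emark"
  root :: "'v \<Rightarrow> bool"

definition wf_hgraph :: "('v, 'e) hgraph \<Rightarrow> bool" where
  "wf_hgraph G \<longleftrightarrow> finite (V G) \<and> finite (E G) \<and>
     (\<forall>e \<in> E G. src G e \<in> V G \<and> tgt G e \<in> V G)"

text \<open>Edge relation; a graph is acyclic iff this relation is acyclic
 (a loop gives a pair (x,x), hence counts as a cycle).\<close>
definition edge_rel :: "('v, 'e) hgraph \<Rightarrow> ('v \<times> 'v) set" where
  "edge_rel G = {(src G e, tgt G e) | e. e \<in> E G}"

definition graph_acyclic :: "('v, 'e) hgraph \<Rightarrow> bool" where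
  "graph_acyclic G \<longleftrightarrow> acyclic (edge_rel G)"

definition iso_upto_marks :: "('v, 'e) hgraph \<Rightarrow> ('w, 'f) hgraph \<Rightarrow> bool" where
  "iso_upto_marks G H \<longleftrightarrow> (\<exists>fV fE.
     bij_betw fV (V G) (V H) \<and> bij_betw fE (E G) (E H) \<and>
     (\<forall>e \<in> E G. src H (fE e) = fV (src G e) \<and> tgt H (fE e) = fV (tgt G e)
                 \<and> elab H (fE e) = elab G e) \<and>
     (\<forall>v \<in> V G. nlab H (fV v) = nlab G v))"

definition setN :: "('v, 'e) hgraph \<Rightarrow> 'v \<Rightarrow> nmark \<Rightarrow> bool \<Rightarrow> ('v, 'e) hgraph" where
  "setN G v m r = G\<lparr>nmark := (nmark G)(v := m), root := (root G)(v := r)\<rparr>"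

definition setE :: "('v, 'e) hgraph \<Rightarrow> 'e \<Rightarrow> emark \<Rightarrow> ('v, 'e) hgraph" where
  "setE G e m = G\<lparr>emark := (emark G)(e := m)\<rparr>"

datatype rule = Init | Unroot | SetFlag | Flag | NextEdge | Ignore | Move | Back | LoopR

text \<open>A root node of a left-hand side must match a root;
 a non-root left-hand-side node may match any node (root status of the host
 node changes only where the rule changes it). Matches are injective, so
 two-node rules need distinct endpoints. No rule deletes anything, so the
 dangling condition holds trivially.\<close>
fun apply_rule :: "rule \<Rightarrow> ('v, 'e) hgraph \<Rightarrow> ('v, 'e) hgraph \<Rightarrow> bool" where
  "apply_rule Init G H \<longleftrightarrow> (\<exists>v \<in> V G. nmark G v = NGrey \<and> H = setN G v NRed True)"
| "apply_rule Unroot G H \<longleftrightarrow>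
     (\<exists>v \<in> V G. nmark G v = NRed \<and> root G v \<and> H = setN G v NBlue False)"
| "apply_rule SetFlag G H \<longleftrightarrow>
     (\<exists>v \<in> V G. nmark G v = NRed \<and> root G v \<and> H = setN G v NGreen True)"
| "apply_rule Flag G H \<longleftrightarrow> (\<exists>v \<in> V G. nmark G v = NGreen \<and> root G v \<and> H = G)"
| "apply_rule NextEdge G H \<longleftrightarrow> (\<exists>e \<in> E G. src G e \<noteq> tgt G e \<and>
     nmark G (src G e) = NRed \<and> root G (src G e) \<and> emark G e = EUnmarked \<and>
     H = setE G e ERed)"
| "apply_rule Ignore G H \<longleftrightarrow> (\<exists>e \<in> E G. src G e \<noteq> tgt G e \<and>
     nmark G (src G e) = NRed \<and> root G (src G e) \<and> nmark G (tgt G e) = NBlue \<and>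
     emark G e = ERed \<and> H = setE G e EBlue)"
| "apply_rule Move G H \<longleftrightarrow> (\<exists>e \<in> E G. src G e \<noteq> tgt G e \<and>
     nmark G (src G e) = NRed \<and> root G (src G e) \<and> nmark G (tgt G e) = NGrey \<and>
     emark G e = ERed \<and>
     H = setE (setN (setN G (src G e) NRed False) (tgt G e) NRed True) e EDashed)"
| "apply_rule Back G H \<longleftrightarrow> (\<exists>e \<in> E G. src G e \<noteq> tgt G e \<and>
     nmark G (src G e) = NRed \<and> nmark G (tgt G e) = NRed \<and> root G (tgt G e) \<and>
     emark G e = EDashed \<and>
     H = setE (setN (setN G (src G e) NRed True) (tgt G e) NBlue False) e EBlue)"
| "apply_rule LoopR G H \<longleftrightarrow> (\<exists>e \<in> E G. src G e = tgt G e \<and>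
     nmark G (src G e) = NRed \<and> root G (src G e) \<and> emark G e = EUnmarked \<and>
     H = setN G (src G e) NGreen True)"

datatype cmd = Call "rule list" | Seq cmd cmd | Alap cmd | Try cmd cmd cmd
  | IfC cmd cmd cmd | Skip | FailC | Break

datatype 'g result = Ok 'g | Failed | Brk 'g

inductive exec :: "cmd \<Rightarrow> ('v, 'e) hgraph \<Rightarrow> ('v, 'e) hgraph result \<Rightarrow> bool" where
  call_ok: "r \<in> set rs \<Longrightarrow> apply_rule r G H \<Longrightarrow> exec (Call rs) G (Ok H)"
| call_fail: "(\<forall>r \<in> set rs. \<forall>H. \<not> apply_rule r G H) \<Longrightarrow> exec (Call rs) G Failed"
| seq_ok: "exec P G (Ok H) \<Longrightarrow> exec Q H res \<Longrightarrow> exec (Seq P Q) G res"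
| seq_fail: "exec P G Failed \<Longrightarrow> exec (Seq P Q) G Failed"
| seq_brk: "exec P G (Brk H) \<Longrightarrow> exec (Seq P Q) G (Brk H)"
| alap_step: "exec P G (Ok H) \<Longrightarrow> exec (Alap P) H res \<Longrightarrow> exec (Alap P) G res"
| alap_fail: "exec P G Failed \<Longrightarrow> exec (Alap P) G (Ok G)"
| alap_brk: "exec P G (Brk H) \<Longrightarrow> exec (Alap P) G (Ok H)"
| try_ok: "exec C G (Ok H) \<Longrightarrow> exec P H res \<Longrightarrow> exec (Try C P Q) G res"
| try_fail: "exec C G Failed \<Longrightarrow> exec Q G res \<Longrightarrow> exec (Try C P Q) G res"
| try_brk: "exec C G (Brk H) \<Longrightarrow> exec (Try C P Q) G (Brk H)"
| if_ok: "exec C G (Ok H) \<Longrightarrow> exec P G res \<Longrightarrow> exec (IfC C P Q) G res"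
| if_brk: "exec C G (Brk H) \<Longrightarrow> exec P G res \<Longrightarrow> exec (IfC C P Q) G res"
| if_fail: "exec C G Failed \<Longrightarrow> exec Q G res \<Longrightarrow> exec (IfC C P Q) G res"
| skip: "exec Skip G (Ok G)"
| fail: "exec FailC G Failed"
| break: "exec Break G (Brk G)"

text \<open>Termination: every execution of the command on the graph is finite
 (least fixed point, so loops can only be iterated finitely often).\<close>
inductive terminates :: "cmd \<Rightarrow> ('v, 'e) hgraph \<Rightarrow> bool" where
  "terminates (Call rs) G"
| "terminates P G \<Longrightarrow> (\<forall>H. exec P G (Ok H) \<longrightarrow> terminates Q H) \<Longrightarrow> terminates (Seq P Q) G"
| "terminates P G \<Longrightarrow> (\<forall>H. exec P G (Ok H) \<longrightarrow> terminates (Alap P) H) \<Longrightarrow> terminates (Alap P) G"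
| "terminates C G \<Longrightarrow> (\<forall>H. exec C G (Ok H) \<longrightarrow> terminates P H) \<Longrightarrow>
     (exec C G Failed \<longrightarrow> terminates Q G) \<Longrightarrow> terminates (Try C P Q) G"
| "terminates C G \<Longrightarrow> ((\<exists>H. exec C G (Ok H) \<or> exec C G (Brk H)) \<longrightarrow> terminates P G) \<Longrightarrow>
     (exec C G Failed \<longrightarrow> terminates Q G) \<Longrightarrow> terminates (IfC C P Q) G"
| "terminates Skip G"
| "terminates FailC G"
| "terminates Break G"

definition DFS :: cmd where
  "DFS = Try (Call [NextEdge])
            (Try (Call [Move, Ignore]) Skip (Seq (Call [SetFlag]) Break))
            (Seq (Try (Call [LoopR]) Skip Skip) (Try (Call [Back]) Skip Break))"

definition Check :: cmd where
  "Check = IfC (Call [Flag]) FailC Skip"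

definition is_dag :: cmd where
  "is_dag = Seq (Alap (Seq (Call [Init]) (Seq (Alap DFS) (Try (Call [Unroot]) Skip Break)))) Check"

definition initial_graph :: "('v, 'e) hgraph \<Rightarrow> bool" where
  "initial_graph G \<longleftrightarrow> wf_hgraph G \<and>
     (\<forall>v \<in> V G. nmark G v = NGrey \<and> \<not> root G v) \<and>
     (\<forall>e \<in> E G. emark G e = EUnmarked)"

end

theory Submission
  imports Defs
begin

(* Each round of the outer loop starts a depth-first search at a grey node. During a search
   the red nodes form the search stack, joined by dashed tree edges, and blue nodes are
   finished: every successor of a blue node is blue, and the out-edges of blue nodes form an
   acyclic relation. An edge from the current node to a red node, or a loop at it, closes a
   cycle through the stack, and the search raises the green flag. If no flag is ever raised,
   every node ends up blue, so the whole graph is acyclic. Each search step marks an edge or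
   finishes a node and each round consumes a grey node, which gives termination; since rules
   only change marks, the result is the input graph up to marks. *)

lemma exec_Call_iff:
  "exec (Call rs) G res \<longleftrightarrow>
     (\<exists>r\<in>set rs. \<exists>H. apply_rule r G H \<and> res = Ok H) \<or>
     (res = Failed \<and> (\<forall>r\<in>set rs. \<forall>H. \<not> apply_rule r G H))"
  by (auto elim: exec.cases intro: exec.intros)

lemma exec_Seq_iff:
  "exec (Seq P Q) G res \<longleftrightarrow>
     (\<exists>H. exec P G (Ok H) \<and> exec Q H res) \<or>
     (exec P G Failed \<and> res = Failed) \<or> (\<exists>H. exec P G (Brk H) \<and> res = Brk H)"
  by (auto elim: exec.cases intro: exec.intros)

lemma exec_Try_iff:
  "exec (Try C P Q) G res \<longleftrightarrow>
     (\<exists>H. exec C G (Ok H) \<and> exec P H res) \<or>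
     (exec C G Failed \<and> exec Q G res) \<or> (\<exists>H. exec C G (Brk H) \<and> res = Brk H)"
  by (auto elim: exec.cases intro: exec.intros)

lemma exec_IfC_iff:
  "exec (IfC C P Q) G res \<longleftrightarrow>
     ((\<exists>H. exec C G (Ok H) \<or> exec C G (Brk H)) \<and> exec P G res) \<or>
     (exec C G Failed \<and> exec Q G res)"
  by (auto elim: exec.cases intro: exec.intros)

lemma exec_Skip_iff: "exec Skip G res \<longleftrightarrow> res = Ok G"
  and exec_FailC_iff: "exec FailC G res \<longleftrightarrow> res = Failed"
  and exec_Break_iff: "exec Break G res \<longleftrightarrow> res = Brk G"
  by (auto elim: exec.cases intro: exec.intros)

lemmas exec_iffs = exec_Call_iff exec_Seq_iff exec_Try_iff exec_IfC_iff
  exec_Skip_iff exec_FailC_iff exec_Break_iff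

lemma terminates_imp_exec: "terminates c G \<Longrightarrow> \<exists>res. exec c G res"
proof (induction rule: terminates.induct)
  case (2 P G Q)
  then show ?case by (metis result.exhaust exec.seq_ok exec.seq_fail exec.seq_brk)
next
  case (3 P G)
  then show ?case by (metis result.exhaust exec.alap_step exec.alap_fail exec.alap_brk)
next
  case (4 C G P Q)
  then show ?case by (metis result.exhaust exec.try_ok exec.try_fail exec.try_brk)
next
  case (5 C G P Q)
  then show ?case by (metis result.exhaust exec.if_ok exec.if_fail exec.if_brk)
qed (auto intro: exec.intros)

fun loop_free :: "cmd \<Rightarrow> bool" where
  "loop_free (Alap _) \<longleftrightarrow> False"
| "loop_free (Seq P Q) \<longleftrightarrow> loop_free P \<and> loop_free Q"
| "loop_free (Try C P Q) \<longleftrightarrow> loop_free C \<and> loop_free P \<and> loop_free Q"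
| "loop_free (IfC C P Q) \<longleftrightarrow> loop_free C \<and> loop_free P \<and> loop_free Q"
| "loop_free _ \<longleftrightarrow> True"

lemma loop_free_terminates: "loop_free c \<Longrightarrow> terminates c G"
  by (induction c arbitrary: G) (auto intro: terminates.intros)

lemma terminates_Alap_measure:
  fixes f :: "('v, 'e) hgraph \<Rightarrow> nat"
  assumes "I G"
    and body: "\<And>G. I G \<Longrightarrow> terminates P G"
    and step: "\<And>G H. I G \<Longrightarrow> exec P G (Ok H) \<Longrightarrow> I H \<and> f H < f G"
  shows "terminates (Alap P) G"
  using \<open>I G\<close>
proof (induction "f G" arbitrary: G rule: less_induct)
  case less
  then show ?case by (blast intro: terminates.intros(3) body dest: step)
qed

lemma exec_Alap_exit:
  assumes "exec (Alap P) G res" and "I G"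
    and step: "\<And>G H. I G \<Longrightarrow> exec P G (Ok H) \<Longrightarrow> I H"
  shows "\<exists>G' H. I G' \<and> res = Ok H \<and> (H = G' \<and> exec P G' Failed \<or> exec P G' (Brk H))"
  using assms(1,2)
proof (induction "Alap P" G res rule: exec.induct)
  case (alap_step G H res)
  then show ?case using step by blast
qed blast+

lemma setN_simps [simp]:
  "V (setN G v m r) = V G" "E (setN G v m r) = E G"
  "src (setN G v m r) = src G" "tgt (setN G v m r) = tgt G"
  "nlab (setN G v m r) = nlab G" "elab (setN G v m r) = elab G"
  "nmark (setN G v m r) = (nmark G)(v := m)" "root (setN G v m r) = (root G)(v := r)"
  "emark (setN G v m r) = emark G"
  by (simp_all add: setN_def)

lemma setE_simps [simp]:
  "V (setE G e m) = V G" "E (setE G e m) = E G"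
  "src (setE G e m) = src G" "tgt (setE G e m) = tgt G"
  "nlab (setE G e m) = nlab G" "elab (setE G e m) = elab G"
  "nmark (setE G e m) = nmark G" "root (setE G e m) = root G"
  "emark (setE G e m) = (emark G)(e := m)"
  by (simp_all add: setE_def)

lemma setE_setN_commute: "setE (setN G v m r) e n = setN (setE G e n) v m r"
  by (simp add: setE_def setN_def)

lemma setE_twice: "setE (setE G e m) e n = setE G e n"
  by (simp add: setE_def)

lemma wf_hgraph_setN [simp]: "wf_hgraph (setN G v m r) \<longleftrightarrow> wf_hgraph G"
  and wf_hgraph_setE [simp]: "wf_hgraph (setE G e n) \<longleftrightarrow> wf_hgraph G"
  by (simp_all add: wf_hgraph_def)

definition same_structure :: "('v, 'e) hgraph \<Rightarrow> ('v, 'e) hgraph \<Rightarrow> bool" where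
  "same_structure G H \<longleftrightarrow> V H = V G \<and> E H = E G \<and> src H = src G \<and> tgt H = tgt G \<and>
     nlab H = nlab G \<and> elab H = elab G"

lemma same_structure_iso_upto_marks: "same_structure G H \<Longrightarrow> iso_upto_marks G H"
  unfolding same_structure_def iso_upto_marks_def
  by (rule exI[of _ id], rule exI[of _ id]) (simp add: bij_betw_def)

lemma edge_relI: "e \<in> E G \<Longrightarrow> (src G e, tgt G e) \<in> edge_rel G"
  by (auto simp: edge_rel_def)

lemma same_structure_edge_rel: "same_structure G H \<Longrightarrow> edge_rel H = edge_rel G"
  by (simp add: same_structure_def edge_rel_def)

definition grey_nodes :: "('v, 'e) hgraph \<Rightarrow> 'v set" where
  "grey_nodes G = {v \<in> V G. nmark G v = NGrey}"

definition nonblue_nodes :: "('v, 'e) hgraph \<Rightarrow> 'v set" where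
  "nonblue_nodes G = {v \<in> V G. nmark G v \<noteq> NBlue}"

definition unmarked_edges :: "('v, 'e) hgraph \<Rightarrow> 'e set" where
  "unmarked_edges G = {e \<in> E G. emark G e = EUnmarked}"

definition mark_progress :: "('v, 'e) hgraph \<Rightarrow> ('v, 'e) hgraph \<Rightarrow> bool" where
  "mark_progress G H \<longleftrightarrow> same_structure G H \<and> grey_nodes H \<subseteq> grey_nodes G \<and>
     nonblue_nodes H \<subseteq> nonblue_nodes G \<and> unmarked_edges H \<subseteq> unmarked_edges G"

lemma apply_rule_mark_progress: "apply_rule r G H \<Longrightarrow> mark_progress G H"
  by (cases r)
    (auto simp: mark_progress_def same_structure_def grey_nodes_def nonblue_nodes_def unmarked_edges_def
      split: if_splits)

lemma exec_mark_progress: "exec c G res \<Longrightarrow> res = Ok H \<or> res = Brk H \<Longrightarrow> mark_progress G H"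
proof (induction arbitrary: H rule: exec.induct)
  case (call_ok r rs G H)
  then show ?case by (simp add: apply_rule_mark_progress)
qed (fastforce simp: mark_progress_def same_structure_def)+

(* Move and Ignore mark an unmarked edge, Back turns a red node blue. *)
definition dfs_measure :: "('v, 'e) hgraph \<Rightarrow> nat" where
  "dfs_measure G = card (unmarked_edges G) + card (nonblue_nodes G)"

lemma dfs_measure_less:
  assumes "wf_hgraph G" "mark_progress G H"
    and "unmarked_edges H \<noteq> unmarked_edges G \<or> nonblue_nodes H \<noteq> nonblue_nodes G"
  shows "dfs_measure H < dfs_measure G"
proof -
  have "finite (unmarked_edges G)" "finite (nonblue_nodes G)"
    using \<open>wf_hgraph G\<close> by (auto simp: wf_hgraph_def unmarked_edges_def nonblue_nodes_def)
  with assms(2,3) show ?thesis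
    unfolding dfs_measure_def mark_progress_def
    by (metis add_less_le_mono add_le_less_mono card_mono psubsetI psubset_card_mono)
qed

section \<open>Finished nodes\<close>

lemma acyclic_Un_source:
  assumes "acyclic r" "u \<notin> Range r" "u \<notin> S"
  shows "acyclic (r \<union> {u} \<times> S)"
proof -
  have "(a, b) \<in> r\<^sup>+ \<or> a = u \<and> b \<noteq> u" if "(a, b) \<in> (r \<union> {u} \<times> S)\<^sup>+" for a b
    using that
  proof (induction rule: trancl_induct)
    case (step y z)
    have "y \<noteq> u"
      using step.IH assms(2) by (metis Range.intros trancl_range)
    with step.hyps(2) have "(y, z) \<in> r" by blast
    with step.IH assms(2) show ?case by (auto intro: trancl_into_trancl)
  qed (use assms(3) in auto)
  with assms(1) show ?thesis unfolding acyclic_def by blast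
qed

definition blue_rel :: "('v, 'e) hgraph \<Rightarrow> ('v \<times> 'v) set" where
  "blue_rel G = {(src G e, tgt G e) | e. e \<in> E G \<and> nmark G (src G e) = NBlue}"

definition blue_inv :: "('v, 'e) hgraph \<Rightarrow> bool" where
  "blue_inv G \<longleftrightarrow>
     (\<forall>e \<in> E G. emark G e = EBlue \<longrightarrow> nmark G (tgt G e) = NBlue) \<and>
     (\<forall>e \<in> E G. nmark G (src G e) = NBlue \<longrightarrow> nmark G (tgt G e) = NBlue) \<and>
     acyclic (blue_rel G)"

lemma blue_inv_cong:
  assumes "E K = E G" "src K = src G" "tgt K = tgt G"
    and "\<And>v. nmark K v = NBlue \<longleftrightarrow> nmark G v = NBlue"
    and "\<And>e. emark K e = EBlue \<longleftrightarrow> emark G e = EBlue"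
  shows "blue_inv K \<longleftrightarrow> blue_inv G"
proof -
  have "blue_rel K = blue_rel G" using assms by (simp add: blue_rel_def)
  with assms show ?thesis by (simp add: blue_inv_def)
qed

lemma blue_inv_paint_edge:
  "blue_inv G \<Longrightarrow> nmark G (tgt G e) = NBlue \<Longrightarrow> blue_inv (setE G e EBlue)"
  by (auto simp: blue_inv_def blue_rel_def)

lemma blue_inv_paint_node:
  assumes "blue_inv G" "nmark G u \<noteq> NBlue"
    and succ_blue: "\<forall>e \<in> E G. src G e = u \<longrightarrow> nmark G (tgt G e) = NBlue"
  shows "blue_inv (setN G u NBlue r)"
proof -
  let ?S = "{tgt G e | e. e \<in> E G \<and> src G e = u}"
  have "u \<notin> Range (blue_rel G)"
    using assms(1,2) by (auto simp: blue_inv_def blue_rel_def)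
  moreover have "u \<notin> ?S" using assms(2) succ_blue by auto
  ultimately have "acyclic (blue_rel G \<union> {u} \<times> ?S)"
    using assms(1) unfolding blue_inv_def by (blast intro: acyclic_Un_source)
  moreover have "blue_rel (setN G u NBlue r) \<subseteq> blue_rel G \<union> {u} \<times> ?S"
    by (auto simp: blue_rel_def)
  ultimately have "acyclic (blue_rel (setN G u NBlue r))" by (rule acyclic_subset)
  with assms(1) succ_blue show ?thesis by (simp add: blue_inv_def)
qed

section \<open>The search stack\<close>

(* ds ! i is an edge from vs ! Suc i to vs ! i. During a search, vs is the stack of red
   nodes with the current node first, and ds lists the dashed tree edges. *)
fun rev_walk :: "('e \<Rightarrow> 'v) \<Rightarrow> ('e \<Rightarrow> 'v) \<Rightarrow> 'v list \<Rightarrow> 'e list \<Rightarrow> bool" where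
  "rev_walk s t [v] [] \<longleftrightarrow> True"
| "rev_walk s t (v # w # vs) (d # ds) \<longleftrightarrow> s d = w \<and> t d = v \<and> rev_walk s t (w # vs) ds"
| "rev_walk s t _ _ \<longleftrightarrow> False"

lemma rev_walk_Nil: "rev_walk s t vs [] \<longleftrightarrow> (\<exists>v. vs = [v])"
  by (auto elim: rev_walk.elims)

lemma rev_walk_nonempty: "rev_walk s t vs ds \<Longrightarrow> vs \<noteq> []"
  by (cases vs) auto

lemma rev_walk_Cons:
  "rev_walk s t vs ds \<Longrightarrow> s d = hd vs \<Longrightarrow> t d = v \<Longrightarrow> rev_walk s t (v # vs) (d # ds)"
  by (cases vs) auto

lemma rev_walk_src: "rev_walk s t vs ds \<Longrightarrow> d \<in> set ds \<Longrightarrow> s d \<in> set (tl vs)"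
  by (induction s t vs ds rule: rev_walk.induct) auto

lemma rev_walk_tgt: "rev_walk s t vs ds \<Longrightarrow> d \<in> set ds \<Longrightarrow> t d \<in> set vs"
  by (induction s t vs ds rule: rev_walk.induct) auto

lemma rev_walk_into_hd:
  "rev_walk s t vs ds \<Longrightarrow> distinct vs \<Longrightarrow> d \<in> set ds \<Longrightarrow> t d = hd vs \<Longrightarrow> d = hd ds"
  by (cases "(s, t, vs, ds)" rule: rev_walk.cases) (auto dest: rev_walk_tgt)

lemma rev_walk_reaches_hd:
  "rev_walk s t vs ds \<Longrightarrow> u \<in> set vs \<Longrightarrow> (u, hd vs) \<in> {(s d, t d) | d. d \<in> set ds}\<^sup>*"
proof (induction s t vs ds rule: rev_walk.induct)
  case (2 s t v w vs d ds)
  let ?R = "\<lambda>ds. {(s d, t d) | d. d \<in> set ds}"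
  show ?case
  proof (cases "u = v")
    case False
    with "2.prems" have "(u, w) \<in> (?R ds)\<^sup>*" using "2.IH" by auto
    then have "(u, w) \<in> (?R (d # ds))\<^sup>*" by (rule rtrancl_mono[THEN subsetD, rotated]) auto
    moreover have "(w, v) \<in> ?R (d # ds)" using "2.prems" by auto
    ultimately show ?thesis by (simp add: rtrancl.rtrancl_into_rtrancl)
  qed simp
qed auto

definition idle_inv :: "('v, 'e) hgraph \<Rightarrow> bool" where
  "idle_inv G \<longleftrightarrow> wf_hgraph G \<and> blue_inv G \<and>
     (\<forall>v \<in> V G. nmark G v \<in> {NGrey, NBlue} \<and> \<not> root G v) \<and>
     (\<forall>e \<in> E G. emark G e \<in> {EUnmarked, EBlue})"

definition stack_nodes :: "('v, 'e) hgraph \<Rightarrow> 'v list \<Rightarrow> bool" where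
  "stack_nodes G vs \<longleftrightarrow> distinct vs \<and> set vs \<subseteq> V G \<and>
     (\<forall>v \<in> V G. nmark G v \<in> {NGrey, NRed, NBlue} \<and>
        (nmark G v = NRed \<longleftrightarrow> v \<in> set vs) \<and> (root G v \<longleftrightarrow> v = hd vs))"

definition stack_edges :: "('v, 'e) hgraph \<Rightarrow> 'v list \<Rightarrow> 'e list \<Rightarrow> bool" where
  "stack_edges G vs ds \<longleftrightarrow> rev_walk (src G) (tgt G) vs ds \<and>
     (\<forall>e \<in> E G. emark G e \<in> {EUnmarked, EBlue, EDashed}) \<and>
     {e \<in> E G. emark G e = EDashed} = set ds"

definition dfs_inv :: "('v, 'e) hgraph \<Rightarrow> 'v list \<Rightarrow> 'e list \<Rightarrow> bool" where
  "dfs_inv G vs ds \<longleftrightarrow> wf_hgraph G \<and> blue_inv G \<and> stack_nodes G vs \<and> stack_edges G vs ds"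

(* The flag is raised only on a graph that really has a cycle; the state predicate carries
   this fact along. *)
definition cycle_found :: "('v, 'e) hgraph \<Rightarrow> bool" where
  "cycle_found G \<longleftrightarrow> (\<exists>v \<in> V G. nmark G v = NGreen \<and> root G v) \<and>
     (\<forall>v \<in> V G. root G v \<longrightarrow> nmark G v \<noteq> NRed) \<and> \<not> acyclic (edge_rel G)"

definition explored :: "('v, 'e) hgraph \<Rightarrow> 'v \<Rightarrow> bool" where
  "explored G u \<longleftrightarrow> (\<forall>e \<in> E G. src G e = u \<longrightarrow> emark G e \<noteq> EUnmarked)"

definition move_along :: "('v, 'e) hgraph \<Rightarrow> 'e \<Rightarrow> ('v, 'e) hgraph" where
  "move_along G e = setE (setN (setN G (src G e) NRed False) (tgt G e) NRed True) e EDashed"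

definition back_along :: "('v, 'e) hgraph \<Rightarrow> 'e \<Rightarrow> ('v, 'e) hgraph" where
  "back_along G e = setE (setN (setN G (src G e) NRed True) (tgt G e) NBlue False) e EBlue"

lemma stack_nodes_setE [simp]: "stack_nodes (setE G e m) vs \<longleftrightarrow> stack_nodes G vs"
  by (simp add: stack_nodes_def)

lemma stack_edges_setN [simp]: "stack_edges (setN G v m r) vs ds \<longleftrightarrow> stack_edges G vs ds"
  by (simp add: stack_edges_def)

lemma stack_nodes_push:
  assumes "stack_nodes G vs" "vs \<noteq> []" "t \<in> V G" "nmark G t = NGrey"
  shows "stack_nodes (setN (setN G (hd vs) NRed False) t NRed True) (t # vs)"
  using assms by (auto simp: stack_nodes_def)

lemma stack_nodes_pop:
  assumes "stack_nodes G (v # w # vs)"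
  shows "stack_nodes (setN (setN G w NRed True) v NBlue False) (w # vs)"
  using assms by (auto simp: stack_nodes_def)

lemma stack_edges_push:
  assumes "stack_edges G vs ds" "e \<in> E G" "emark G e = EUnmarked" "src G e = hd vs"
  shows "stack_edges (setE G e EDashed) (tgt G e # vs) (e # ds)"
  using assms rev_walk_Cons[of "src G" "tgt G" vs ds e] by (auto simp: stack_edges_def)

lemma stack_edges_pop:
  assumes "stack_edges G (v # w # vs) (d # ds)" "v \<notin> set (w # vs)"
  shows "stack_edges (setE G d EBlue) (w # vs) ds"
proof -
  have "d \<notin> set ds"
    using assms rev_walk_tgt[of "src G" "tgt G" "w # vs" ds d] by (auto simp: stack_edges_def)
  with assms show ?thesis by (auto simp: stack_edges_def)
qed

lemma stack_edges_paint:
  assumes "stack_edges G vs ds" "emark G e = EUnmarked"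
  shows "stack_edges (setE G e EBlue) vs ds"
proof -
  have "e \<notin> set ds" using assms by (force simp: stack_edges_def)
  with assms show ?thesis by (auto simp: stack_edges_def)
qed

lemma idle_inv_initial:
  assumes "initial_graph G"
  shows "idle_inv G"
proof -
  have "blue_rel G = {}"
    using assms by (force simp: initial_graph_def blue_rel_def wf_hgraph_def)
  with assms show ?thesis
    by (auto simp: initial_graph_def idle_inv_def blue_inv_def wf_hgraph_def acyclic_def)
qed

lemma dfs_inv_init:
  assumes "idle_inv G" "v \<in> V G" "nmark G v = NGrey"
  shows "dfs_inv (setN G v NRed True) [v] []"
proof -
  have "blue_inv (setN G v NRed True)"
    using assms by (subst blue_inv_cong) (auto simp: idle_inv_def)
  with assms show ?thesis
    by (auto simp: idle_inv_def dfs_inv_def stack_nodes_def stack_edges_def)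
qed

lemma dfs_inv_nonempty: "dfs_inv G vs ds \<Longrightarrow> vs \<noteq> []"
  using rev_walk_nonempty by (auto simp: dfs_inv_def stack_edges_def)

lemma dfs_inv_hd:
  assumes "dfs_inv G vs ds"
  shows "hd vs \<in> V G" "nmark G (hd vs) = NRed" "root G (hd vs)"
proof -
  have "vs \<noteq> []" using assms by (rule dfs_inv_nonempty)
  with assms show "hd vs \<in> V G" by (auto simp: dfs_inv_def stack_nodes_def)
  with assms \<open>vs \<noteq> []\<close> show "nmark G (hd vs) = NRed" "root G (hd vs)"
    by (auto simp: dfs_inv_def stack_nodes_def)
qed

lemma dfs_inv_marked_out_edge:
  assumes inv: "dfs_inv G vs ds" and e: "e \<in> E G" "src G e = hd vs" "emark G e \<noteq> EUnmarked"
  shows "nmark G (tgt G e) = NBlue"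
proof -
  have "e \<notin> set ds"
  proof
    assume "e \<in> set ds"
    then have "src G e \<in> set (tl vs)"
      using inv rev_walk_src by (fastforce simp: dfs_inv_def stack_edges_def)
    with e(2) inv show False by (cases vs) (auto simp: dfs_inv_def stack_nodes_def)
  qed
  with inv e have "emark G e = EBlue" by (auto simp: dfs_inv_def stack_edges_def)
  with inv e(1) show ?thesis by (simp add: dfs_inv_def blue_inv_def)
qed

lemma dfs_inv_move:
  assumes inv: "dfs_inv G vs ds"
    and e: "e \<in> E G" "src G e = hd vs" "emark G e = EUnmarked" "nmark G (tgt G e) = NGrey"
  shows "dfs_inv (move_along G e) (tgt G e # vs) (e # ds)"
proof -
  have "tgt G e \<in> V G" using inv e(1) by (simp add: dfs_inv_def wf_hgraph_def)
  moreover have "vs \<noteq> []" using inv by (rule dfs_inv_nonempty)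
  moreover have "nmark G (src G e) = NRed" using dfs_inv_hd[OF inv] e(2) by simp
  moreover have "blue_inv (move_along G e)"
    using inv e(3,4) \<open>nmark G (src G e) = NRed\<close> unfolding move_along_def
    by (subst blue_inv_cong) (auto simp: dfs_inv_def)
  ultimately show ?thesis
    using inv e stack_nodes_push[of G vs "tgt G e"]
      stack_edges_push[of "setN (setN G (src G e) NRed False) (tgt G e) NRed True" vs ds e]
    by (simp add: dfs_inv_def move_along_def)
qed

lemma dfs_inv_ignore:
  assumes "dfs_inv G vs ds" "e \<in> E G" "emark G e = EUnmarked" "nmark G (tgt G e) = NBlue"
  shows "dfs_inv (setE G e EBlue) vs ds"
  using assms unfolding dfs_inv_def by (auto intro: blue_inv_paint_edge stack_edges_paint)

lemma dfs_inv_back: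
  assumes inv: "dfs_inv G (v # w # vs) (d # ds)" and "explored G v"
  shows "dfs_inv (back_along G d) (w # vs) ds"
proof -
  have v: "nmark G v = NRed" "v \<notin> set (w # vs)" and w: "nmark G w = NRed"
    and d: "src G d = w" "tgt G d = v"
    using inv dfs_inv_hd[OF inv] by (auto simp: dfs_inv_def stack_nodes_def stack_edges_def)
  have "\<forall>e \<in> E G. src G e = v \<longrightarrow> nmark G (tgt G e) = NBlue"
    using dfs_inv_marked_out_edge[OF inv] \<open>explored G v\<close> by (auto simp: explored_def)
  moreover have "blue_inv (setN G w NRed True)"
    using inv w by (subst blue_inv_cong) (auto simp: dfs_inv_def)
  ultimately have "blue_inv (setN (setN G w NRed True) v NBlue False)"
    using v w by (intro blue_inv_paint_node) auto
  then have "blue_inv (back_along G d)"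
    using d by (auto simp: back_along_def intro: blue_inv_paint_edge)
  moreover have "stack_nodes (back_along G d) (w # vs)"
    using inv d stack_nodes_pop[of G v w vs] by (simp add: dfs_inv_def back_along_def)
  moreover have "stack_edges (back_along G d) (w # vs) ds"
    using inv v d stack_edges_pop[of G v w vs d ds]
    by (simp add: dfs_inv_def back_along_def setE_setN_commute)
  ultimately show ?thesis using inv by (simp add: dfs_inv_def back_along_def)
qed

lemma idle_inv_unroot:
  assumes inv: "dfs_inv G [u] []" and "explored G u"
  shows "idle_inv (setN G u NBlue False)"
proof -
  have "nmark G u = NRed" using dfs_inv_hd[OF inv] by simp
  moreover have "\<forall>e \<in> E G. src G e = u \<longrightarrow> nmark G (tgt G e) = NBlue"
    using dfs_inv_marked_out_edge[OF inv] \<open>explored G u\<close> by (auto simp: explored_def)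
  ultimately have "blue_inv (setN G u NBlue False)"
    using inv by (intro blue_inv_paint_node) (auto simp: dfs_inv_def)
  with inv show ?thesis by (auto simp: dfs_inv_def idle_inv_def stack_nodes_def stack_edges_def)
qed

lemma dfs_inv_cyclic:
  assumes inv: "dfs_inv G vs ds" and e: "e \<in> E G" "src G e = hd vs" "tgt G e \<in> set vs"
  shows "\<not> acyclic (edge_rel G)"
proof -
  have walk: "rev_walk (src G) (tgt G) vs ds" and "set ds \<subseteq> E G"
    using inv by (auto simp: dfs_inv_def stack_edges_def)
  then have "{(src G d, tgt G d) | d. d \<in> set ds} \<subseteq> edge_rel G"
    by (auto simp: edge_rel_def)
  then have "(tgt G e, hd vs) \<in> (edge_rel G)\<^sup>*"
    using rev_walk_reaches_hd[OF walk e(3)] rtrancl_mono by blast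
  moreover have "(hd vs, tgt G e) \<in> edge_rel G"
    using edge_relI[OF e(1)] e(2) by simp
  ultimately show ?thesis
    unfolding acyclic_def by (meson rtrancl_into_trancl2)
qed

lemma cycle_found_flag:
  assumes "dfs_inv G vs ds" "\<not> acyclic (edge_rel G)"
  shows "cycle_found (setN G (hd vs) NGreen True)"
    and "cycle_found (setN (setE G e m) (hd vs) NGreen True)"
  using assms dfs_inv_hd[OF assms(1)]
  by (auto simp: cycle_found_def dfs_inv_def stack_nodes_def edge_rel_def)

lemma apply_NextEdge_iff:
  assumes "dfs_inv G vs ds"
  shows "apply_rule NextEdge G H \<longleftrightarrow>
    (\<exists>e \<in> E G. src G e = hd vs \<and> src G e \<noteq> tgt G e \<and> emark G e = EUnmarked \<and> H = setE G e ERed)"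
  using assms dfs_inv_hd[OF assms]
  by (auto simp: dfs_inv_def stack_nodes_def wf_hgraph_def)

lemma dfs_inv_unique_red_edge:
  assumes "dfs_inv G vs ds" "e \<in> E G" "e' \<in> E G"
  shows "emark (setE G e ERed) e' = ERed \<longleftrightarrow> e' = e"
  using assms by (auto simp: dfs_inv_def stack_edges_def)

lemma apply_Move_iff:
  assumes inv: "dfs_inv G vs ds" and e: "e \<in> E G" "src G e = hd vs" "src G e \<noteq> tgt G e"
  shows "apply_rule Move (setE G e ERed) K \<longleftrightarrow> nmark G (tgt G e) = NGrey \<and> K = move_along G e"
  using dfs_inv_unique_red_edge[OF inv e(1)] dfs_inv_hd[OF inv] e
  by (auto simp: move_along_def setE_setN_commute setE_twice)

lemma apply_Ignore_iff:
  assumes inv: "dfs_inv G vs ds" and e: "e \<in> E G" "src G e = hd vs" "src G e \<noteq> tgt G e"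
  shows "apply_rule Ignore (setE G e ERed) K \<longleftrightarrow> nmark G (tgt G e) = NBlue \<and> K = setE G e EBlue"
  using dfs_inv_unique_red_edge[OF inv e(1)] dfs_inv_hd[OF inv] e
  by (auto simp: setE_twice)

lemma apply_SetFlag_iff:
  assumes "dfs_inv G vs ds"
  shows "apply_rule SetFlag (setE G e ERed) K \<longleftrightarrow> K = setN (setE G e ERed) (hd vs) NGreen True"
  using assms dfs_inv_hd[OF assms] by (auto simp: dfs_inv_def stack_nodes_def)

lemma apply_LoopR_iff:
  assumes inv: "dfs_inv G vs ds"
  shows "apply_rule LoopR G K \<longleftrightarrow>
    (\<exists>e \<in> E G. src G e = hd vs \<and> tgt G e = hd vs) \<and> K = setN G (hd vs) NGreen True"
proof
  assume "apply_rule LoopR G K"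
  then show "(\<exists>e \<in> E G. src G e = hd vs \<and> tgt G e = hd vs) \<and> K = setN G (hd vs) NGreen True"
    using inv by (auto simp: dfs_inv_def stack_nodes_def wf_hgraph_def)
next
  assume "(\<exists>e \<in> E G. src G e = hd vs \<and> tgt G e = hd vs) \<and> K = setN G (hd vs) NGreen True"
  then obtain e where e: "e \<in> E G" "src G e = hd vs" "tgt G e = hd vs"
    and K: "K = setN G (hd vs) NGreen True" by blast
  have "emark G e = EUnmarked"
    using dfs_inv_marked_out_edge[OF inv e(1,2)] dfs_inv_hd[OF inv] e(3) by auto
  with e K dfs_inv_hd[OF inv] show "apply_rule LoopR G K" by (auto intro!: bexI[of _ e])
qed

lemma apply_Back_iff:
  assumes inv: "dfs_inv G vs ds"
  shows "apply_rule Back G K \<longleftrightarrow> ds \<noteq> [] \<and> K = back_along G (hd ds)"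
proof
  assume "apply_rule Back G K"
  then obtain e where e: "e \<in> E G" "root G (tgt G e)" "emark G e = EDashed" "K = back_along G e"
    by (auto simp: back_along_def)
  then have "tgt G e = hd vs" "e \<in> set ds"
    using inv by (auto simp: dfs_inv_def stack_nodes_def stack_edges_def wf_hgraph_def)
  then show "ds \<noteq> [] \<and> K = back_along G (hd ds)"
    using inv e(4) rev_walk_into_hd[of "src G" "tgt G" vs ds e]
    by (auto simp: dfs_inv_def stack_nodes_def stack_edges_def)
next
  assume "ds \<noteq> [] \<and> K = back_along G (hd ds)"
  then obtain d ds' where ds: "ds = d # ds'" and K: "K = back_along G d" by (cases ds) auto
  then obtain v w vs' where vs: "vs = v # w # vs'" "src G d = w" "tgt G d = v"
    using inv by (auto simp: dfs_inv_def stack_edges_def elim: rev_walk.elims)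
  have "d \<in> E G" "emark G d = EDashed"
    using inv ds by (force simp: dfs_inv_def stack_edges_def)+
  with inv vs K show "apply_rule Back G K"
    by (auto simp: dfs_inv_def stack_nodes_def back_along_def intro!: bexI[of _ d])
qed

lemma no_Back_after_flag:
  assumes "dfs_inv G vs ds"
  shows "\<not> apply_rule Back (setN G (hd vs) NGreen True) K"
  using assms by (auto simp: dfs_inv_def stack_nodes_def wf_hgraph_def)

lemma apply_Unroot_iff:
  assumes "dfs_inv G [u] []"
  shows "apply_rule Unroot G K \<longleftrightarrow> K = setN G u NBlue False"
  using assms dfs_inv_hd[OF assms] by (auto simp: dfs_inv_def stack_nodes_def)

lemma cycle_found_no_Unroot: "cycle_found G \<Longrightarrow> \<not> apply_rule Unroot G K"
  by (auto simp: cycle_found_def)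

lemma cycle_found_Flag: "cycle_found G \<Longrightarrow> apply_rule Flag G G"
  by (auto simp: cycle_found_def)

lemma idle_inv_no_Flag: "idle_inv G \<Longrightarrow> \<not> apply_rule Flag G K"
  by (auto simp: idle_inv_def)

section \<open>The depth-first search\<close>

declare apply_rule.simps [simp del]

definition explore_edge :: cmd where
  "explore_edge = Try (Call [Move, Ignore]) Skip (Seq (Call [SetFlag]) Break)"

definition backtrack :: cmd where
  "backtrack = Seq (Try (Call [LoopR]) Skip Skip) (Try (Call [Back]) Skip Break)"

lemma DFS_eq: "DFS = Try (Call [NextEdge]) explore_edge backtrack"
  by (simp add: DFS_def explore_edge_def backtrack_def)

definition dfs_stopped :: "('v, 'e) hgraph \<Rightarrow> bool" where
  "dfs_stopped H \<longleftrightarrow> cycle_found H \<or> (\<exists>u. dfs_inv H [u] [] \<and> explored H u)"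

lemma exec_explore_edge:
  assumes inv: "dfs_inv G vs ds" and e: "e \<in> E G" "src G e = hd vs" "src G e \<noteq> tgt G e"
    and "exec explore_edge (setE G e ERed) res"
  shows "nmark G (tgt G e) = NGrey \<and> res = Ok (move_along G e) \<or>
    nmark G (tgt G e) = NBlue \<and> res = Ok (setE G e EBlue) \<or>
    nmark G (tgt G e) = NRed \<and> res = Brk (setN (setE G e ERed) (hd vs) NGreen True)"
proof -
  have "nmark G (tgt G e) \<in> {NGrey, NRed, NBlue}"
    using inv e(1) by (auto simp: dfs_inv_def stack_nodes_def wf_hgraph_def)
  with assms(5) show ?thesis
    unfolding explore_edge_def exec_iffs
    by (auto simp: apply_Move_iff[OF inv e] apply_Ignore_iff[OF inv e] apply_SetFlag_iff[OF inv])
qed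

lemma exec_backtrack:
  assumes inv: "dfs_inv G vs ds"
    and no_edge: "\<forall>e \<in> E G. src G e = hd vs \<longrightarrow> src G e \<noteq> tgt G e \<longrightarrow> emark G e \<noteq> EUnmarked"
    and "exec backtrack G res"
  shows "(\<exists>e \<in> E G. src G e = hd vs \<and> tgt G e = hd vs) \<and> res = Brk (setN G (hd vs) NGreen True) \<or>
    explored G (hd vs) \<and> (ds \<noteq> [] \<and> res = Ok (back_along G (hd ds)) \<or> ds = [] \<and> res = Brk G)"
  using assms(3) no_edge no_Back_after_flag[OF inv]
  unfolding backtrack_def exec_iffs explored_def
  by (auto simp: apply_LoopR_iff[OF inv] apply_Back_iff[OF inv])

lemma explore_edge_outcome:
  assumes inv: "dfs_inv G vs ds"
    and e: "e \<in> E G" "src G e = hd vs" "src G e \<noteq> tgt G e" "emark G e = EUnmarked"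
    and "exec explore_edge (setE G e ERed) res"
  shows "(\<exists>H vs' ds'. res = Ok H \<and> dfs_inv H vs' ds' \<and> e \<notin> unmarked_edges H) \<or>
    (\<exists>H. res = Brk H \<and> cycle_found H)"
  using exec_explore_edge[OF inv e(1-3) assms(6)]
proof (elim disjE conjE)
  assume "nmark G (tgt G e) = NGrey" "res = Ok (move_along G e)"
  then show ?thesis
    using dfs_inv_move[OF inv e(1,2,4)] by (auto simp: unmarked_edges_def move_along_def)
next
  assume "nmark G (tgt G e) = NBlue" "res = Ok (setE G e EBlue)"
  then show ?thesis
    using dfs_inv_ignore[OF inv e(1,4)] by (auto simp: unmarked_edges_def)
next
  assume "nmark G (tgt G e) = NRed" "res = Brk (setN (setE G e ERed) (hd vs) NGreen True)"
  moreover from this have "tgt G e \<in> set vs"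
    using inv e(1) by (auto simp: dfs_inv_def stack_nodes_def wf_hgraph_def)
  ultimately show ?thesis
    using cycle_found_flag(2)[OF inv dfs_inv_cyclic[OF inv e(1,2)]] by blast
qed

lemma backtrack_outcome:
  assumes inv: "dfs_inv G vs ds"
    and no_edge: "\<forall>e \<in> E G. src G e = hd vs \<longrightarrow> src G e \<noteq> tgt G e \<longrightarrow> emark G e \<noteq> EUnmarked"
    and "exec backtrack G res"
  shows "(\<exists>H vs' ds'. res = Ok H \<and> dfs_inv H vs' ds' \<and> hd vs \<notin> nonblue_nodes H) \<or>
    (\<exists>H. res = Brk H \<and> dfs_stopped H)"
  using exec_backtrack[OF inv no_edge assms(3)]
proof (elim disjE conjE)
  assume "\<exists>e \<in> E G. src G e = hd vs \<and> tgt G e = hd vs" "res = Brk (setN G (hd vs) NGreen True)"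
  moreover have "hd vs \<in> set vs" using dfs_inv_nonempty[OF inv] by simp
  ultimately show ?thesis
    using cycle_found_flag(1)[OF inv] dfs_inv_cyclic[OF inv] by (auto simp: dfs_stopped_def)
next
  assume "explored G (hd vs)" "ds \<noteq> []" "res = Ok (back_along G (hd ds))"
  moreover obtain v w vs' d ds' where vs: "vs = v # w # vs'" "ds = d # ds'" "tgt G d = v"
    using \<open>ds \<noteq> []\<close> inv by (auto simp: dfs_inv_def stack_edges_def elim: rev_walk.elims)
  moreover have "dfs_inv (back_along G d) (w # vs') ds'"
    using inv \<open>explored G (hd vs)\<close> dfs_inv_back unfolding vs by simp
  ultimately show ?thesis by (auto simp: nonblue_nodes_def back_along_def)
next
  assume "explored G (hd vs)" "ds = []" "res = Brk G"
  moreover from this obtain u where "vs = [u]"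
    using inv by (auto simp: dfs_inv_def stack_edges_def rev_walk_Nil)
  ultimately show ?thesis using inv by (auto simp: dfs_stopped_def)
qed

lemma dfs_step:
  assumes inv: "dfs_inv G vs ds" and exec: "exec DFS G res"
  shows "(\<exists>H vs' ds'. res = Ok H \<and> dfs_inv H vs' ds' \<and> dfs_measure H < dfs_measure G) \<or>
    (\<exists>H. res = Brk H \<and> dfs_stopped H)"
proof -
  have less: "dfs_measure H < dfs_measure G"
    if "res = Ok H" "unmarked_edges H \<noteq> unmarked_edges G \<or> nonblue_nodes H \<noteq> nonblue_nodes G" for H
    using dfs_measure_less exec_mark_progress[OF exec] inv that by (auto simp: dfs_inv_def)
  from exec consider
      (edge) e where "e \<in> E G" "src G e = hd vs" "src G e \<noteq> tgt G e" "emark G e = EUnmarked"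
        "exec explore_edge (setE G e ERed) res"
    | (no_edge) "\<forall>e \<in> E G. src G e = hd vs \<longrightarrow> src G e \<noteq> tgt G e \<longrightarrow> emark G e \<noteq> EUnmarked"
        "exec backtrack G res"
    unfolding DFS_eq exec_Try_iff exec_Call_iff by (auto simp: apply_NextEdge_iff[OF inv])
  then show ?thesis
  proof cases
    case edge
    then have "e \<in> unmarked_edges G" by (simp add: unmarked_edges_def)
    with explore_edge_outcome[OF inv edge] less show ?thesis
      by (auto simp: dfs_stopped_def)
  next
    case no_edge
    have "hd vs \<in> nonblue_nodes G" using dfs_inv_hd[OF inv] by (simp add: nonblue_nodes_def)
    with backtrack_outcome[OF inv no_edge] less show ?thesis by blast
  qed
qed

lemma Alap_DFS_exit:
  assumes "dfs_inv G vs ds" "exec (Alap DFS) G res"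
  shows "\<exists>H. res = Ok H \<and> dfs_stopped H"
proof -
  obtain G' H where "\<exists>vs ds. dfs_inv G' vs ds" "res = Ok H"
      "H = G' \<and> exec DFS G' Failed \<or> exec DFS G' (Brk H)"
    using exec_Alap_exit[where I = "\<lambda>G. \<exists>vs ds. dfs_inv G vs ds", OF assms(2)] assms(1) dfs_step
    by blast
  then show ?thesis using dfs_step by blast
qed

lemma terminates_Alap_DFS:
  assumes "dfs_inv G vs ds"
  shows "terminates (Alap DFS) G"
proof (rule terminates_Alap_measure[where I = "\<lambda>G. \<exists>vs ds. dfs_inv G vs ds" and f = dfs_measure])
  show "\<exists>vs ds. dfs_inv G vs ds" using assms by blast
  show "terminates DFS H" for H by (rule loop_free_terminates) (simp add: DFS_def)
  show "(\<exists>vs ds. dfs_inv H vs ds) \<and> dfs_measure H < dfs_measure G'"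
    if "\<exists>vs ds. dfs_inv G' vs ds" "exec DFS G' (Ok H)" for G' H
    using that dfs_step by blast
qed

section \<open>The outer loop\<close>

definition search_round :: cmd where
  "search_round = Seq (Call [Init]) (Seq (Alap DFS) (Try (Call [Unroot]) Skip Break))"

lemma is_dag_eq: "is_dag = Seq (Alap search_round) Check"
  by (simp add: is_dag_def search_round_def)

lemma search_round_step:
  assumes idle: "idle_inv G" and exec: "exec search_round G res"
  shows "(\<exists>H. res = Ok H \<and> idle_inv H \<and> grey_nodes H \<subset> grey_nodes G) \<or>
    (\<exists>H. res = Brk H \<and> cycle_found H) \<or> res = Failed \<and> grey_nodes G = {}"
proof (cases "grey_nodes G = {}")
  case True
  then have "\<not> apply_rule Init G H" for H by (auto simp: apply_rule.simps grey_nodes_def)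
  with exec show ?thesis
    unfolding search_round_def exec_Seq_iff exec_Call_iff using True by auto
next
  case False
  from exec False obtain v where v: "v \<in> V G" "nmark G v = NGrey"
    and rest: "exec (Seq (Alap DFS) (Try (Call [Unroot]) Skip Break)) (setN G v NRed True) res"
    unfolding search_round_def exec_Seq_iff exec_Call_iff
    by (auto simp: apply_rule.simps grey_nodes_def)
  have inv: "dfs_inv (setN G v NRed True) [v] []" by (rule dfs_inv_init[OF idle v])
  from rest obtain G2 where dfs: "exec (Alap DFS) (setN G v NRed True) (Ok G2)"
    and last: "exec (Try (Call [Unroot]) Skip Break) G2 res"
    unfolding exec_Seq_iff using Alap_DFS_exit[OF inv] by blast
  have "grey_nodes G2 \<subseteq> grey_nodes (setN G v NRed True)"
    using exec_mark_progress[OF dfs] by (simp add: mark_progress_def)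
  also have "\<dots> \<subset> grey_nodes G" using v by (auto simp: grey_nodes_def)
  finally have grey: "grey_nodes G2 \<subset> grey_nodes G" .
  have "dfs_stopped G2" using Alap_DFS_exit[OF inv dfs] by simp
  then show ?thesis
  proof (unfold dfs_stopped_def, elim exE conjE disjE)
    assume "cycle_found G2"
    with last show ?thesis unfolding exec_iffs by (auto dest: cycle_found_no_Unroot)
  next
    fix u assume "dfs_inv G2 [u] []" "explored G2 u"
    moreover from this last have "res = Ok (setN G2 u NBlue False)"
      unfolding exec_iffs by (auto simp: apply_Unroot_iff)
    moreover have "grey_nodes (setN G2 u NBlue False) = grey_nodes G2"
      using dfs_inv_hd[OF \<open>dfs_inv G2 [u] []\<close>] by (auto simp: grey_nodes_def)
    ultimately show ?thesis using grey idle_inv_unroot[of G2 u] by simp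
  qed
qed

lemma terminates_search_round:
  assumes "idle_inv G"
  shows "terminates search_round G"
  unfolding search_round_def
proof (rule terminates.intros(2))
  show "terminates (Call [Init]) G" by (rule terminates.intros(1))
  show "\<forall>H. exec (Call [Init]) G (Ok H) \<longrightarrow>
      terminates (Seq (Alap DFS) (Try (Call [Unroot]) Skip Break)) H"
  proof (intro allI impI terminates.intros(2))
    fix H assume "exec (Call [Init]) G (Ok H)"
    then obtain v where "v \<in> V G" "nmark G v = NGrey" "H = setN G v NRed True"
      by (auto simp: exec_Call_iff apply_rule.simps)
    then show "terminates (Alap DFS) H"
      using terminates_Alap_DFS dfs_inv_init[OF assms] by blast
  qed (auto intro: loop_free_terminates)
qed

lemma terminates_Alap_search_round:
  assumes "idle_inv G"
  shows "terminates (Alap search_round) G"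
proof (rule terminates_Alap_measure[where I = idle_inv and f = "\<lambda>G. card (grey_nodes G)"])
  show "idle_inv H \<and> card (grey_nodes H) < card (grey_nodes G')"
    if "idle_inv G'" "exec search_round G' (Ok H)" for G' H
  proof -
    have "finite (grey_nodes G')"
      using that(1) by (simp add: idle_inv_def wf_hgraph_def grey_nodes_def)
    with search_round_step[OF that] show ?thesis by (auto intro: psubset_card_mono)
  qed
qed (use assms terminates_search_round in auto)

lemma Alap_search_round_exit:
  assumes "idle_inv G" "exec (Alap search_round) G res"
  shows "\<exists>H. res = Ok H \<and> (idle_inv H \<and> grey_nodes H = {} \<or> cycle_found H)"
  using exec_Alap_exit[where I = idle_inv, OF assms(2,1)] search_round_step by blast

lemma idle_inv_acyclic:
  assumes "idle_inv G" "grey_nodes G = {}"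
  shows "acyclic (edge_rel G)"
proof -
  have "blue_rel G = edge_rel G"
    using assms by (auto simp: idle_inv_def grey_nodes_def wf_hgraph_def blue_rel_def edge_rel_def)
  with assms(1) show ?thesis by (simp add: idle_inv_def blue_inv_def)
qed

lemma exec_Check_idle: "idle_inv G \<Longrightarrow> exec Check G res \<longleftrightarrow> res = Ok G"
  using idle_inv_no_Flag by (auto simp: Check_def exec_iffs)

lemma exec_Check_cycle_found: "cycle_found G \<Longrightarrow> exec Check G res \<longleftrightarrow> res = Failed"
  using cycle_found_Flag by (auto simp: Check_def exec_iffs)

lemma terminates_is_dag: "initial_graph G \<Longrightarrow> terminates is_dag G"
  unfolding is_dag_eq
  by (rule terminates.intros(2))
    (auto simp: Check_def intro: terminates_Alap_search_round idle_inv_initial loop_free_terminates)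

lemma exec_is_dag:
  assumes "initial_graph G" "exec is_dag G res"
  shows "(graph_acyclic G \<longrightarrow> (\<exists>H. res = Ok H \<and> iso_upto_marks G H)) \<and>
    (\<not> graph_acyclic G \<longrightarrow> res = Failed)"
proof -
  have idle: "idle_inv G" by (rule idle_inv_initial[OF assms(1)])
  from assms(2) obtain H where loop: "exec (Alap search_round) G (Ok H)"
    and check: "exec Check H res"
    unfolding is_dag_eq exec_Seq_iff using Alap_search_round_exit[OF idle] by blast
  have edges: "edge_rel H = edge_rel G" and iso: "iso_upto_marks G H"
    using exec_mark_progress[OF loop]
    by (simp_all add: mark_progress_def same_structure_edge_rel same_structure_iso_upto_marks)
  from Alap_search_round_exit[OF idle loop] consider
      "idle_inv H" "grey_nodes H = {}" | "cycle_found H"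
    by blast
  then show ?thesis
  proof cases
    case 1
    have "res = Ok H" using check exec_Check_idle[OF 1(1)] by simp
    moreover have "graph_acyclic G"
      using idle_inv_acyclic[OF 1] edges by (simp add: graph_acyclic_def)
    ultimately show ?thesis using iso by blast
  next
    case 2
    have "res = Failed" using check exec_Check_cycle_found[OF 2] by simp
    moreover have "\<not> graph_acyclic G"
      using 2 edges by (simp add: graph_acyclic_def cycle_found_def)
    ultimately show ?thesis by blast
  qed
qed

theorem mainTheorem4:
  fixes G :: "('v, 'e) hgraph"
  assumes "initial_graph G"
  shows "terminates is_dag G \<and>
    (graph_acyclic G \<longrightarrow>
       \<not> exec is_dag G Failed \<and> (\<exists>H. exec is_dag G (Ok H)) \<and>
       (\<forall>res. exec is_dag G res \<longrightarrow> (\<exists>H. res = Ok H \<and> iso_upto_marks G H))) \<and>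
    (\<not> graph_acyclic G \<longrightarrow>
       exec is_dag G Failed \<and> (\<forall>res. exec is_dag G res \<longrightarrow> res = Failed))"
proof -
  have T: "terminates is_dag G" using terminates_is_dag[OF assms] .
  then obtain res0 where "exec is_dag G res0" using terminates_imp_exec by blast
  show ?thesis
  proof (cases "graph_acyclic G")
    case True
    with exec_is_dag[OF assms] have ok: "exec is_dag G res \<Longrightarrow> \<exists>H. res = Ok H \<and> iso_upto_marks G H"
      for res by blast
    then have "\<not> exec is_dag G Failed" by force
    moreover obtain H0 where "res0 = Ok H0" using ok[OF \<open>exec is_dag G res0\<close>] by blast
    with \<open>exec is_dag G res0\<close> have "\<exists>H. exec is_dag G (Ok H)" by blast
    ultimately show ?thesis using T True ok by simp
  next
    case False
    with exec_is_dag[OF assms] have failed: "exec is_dag G res \<Longrightarrow> res = Failed" for res by blast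
    with \<open>exec is_dag G res0\<close> have "exec is_dag G Failed" by force
    with T False failed show ?thesis by simp
  qed
qed

end
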